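(* Let $G$ be a finite group and $T$ a $G$-transfer system. Then $(T,\mathrm{Hull}(T))$ and $(T,T_c)$ are compatible pairs.
   Context: A $G$-transfer system is a partial order $\to$ on the set of subgroups of $G$ such that: $K\to H$ implies $K\le H$; $H\to H$ for all $H$; $L\to K$ and $K\to H$ imply $L\to H$; $K\to H$ implies $K\cap L\to H\cap L$ for every $L\le G$; $K\to H$ implies $gKg^{-1}\to gHg^{-1}$ for all $g\in G$. A transfer system is saturated if whenever $L\le K\le H$ and $L\to H$ is in it, then $K\to H$ is in it; $\mathrm{Hull}(T)$ is the smallest saturated $G$-transfer system containing $T$, and $T_c$ is the complete transfer system containing $K\to H$ for all $K\le H\le G$. A pair $(T,T')$ of $G$-transfer systems is compatible if (1) $T\subseteq T'$, and (2) for all subgroups $A,B,C$ with $B,C\le A$: if $B\to A$ is in $T$ and $B\cap C\to B$ is in $T'$, then $C\to A$ is in $T'$. *)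

theory Defs
  imports "HOL-Algebra.Algebra"
begin

definition subgroups :: "('a, 'b) monoid_scheme \<Rightarrow> 'a set set" where
  "subgroups G = {H. subgroup H G}"

definition conjugate :: "('a, 'b) monoid_scheme \<Rightarrow> 'a \<Rightarrow> 'a set \<Rightarrow> 'a set" where
  "conjugate G g K = (\<lambda>k. g \<otimes>\<^bsub>G\<^esub> k \<otimes>\<^bsub>G\<^esub> inv\<^bsub>G\<^esub> g) ` K"

text \<open>A G-transfer system, as a set of pairs (K,H) meaning K \<rightarrow> H, a partial
  order on the set of subgroups of G satisfying the listed axioms.\<close>

definition transfer_system :: "('a, 'b) monoid_scheme \<Rightarrow> ('a set \<times> 'a set) set \<Rightarrow> bool" where
  "transfer_system G T \<longleftrightarrow>
     T \<subseteq> subgroups G \<times> subgroups G \<and>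
     (\<forall>H\<in>subgroups G. (H, H) \<in> T) \<and>
     (\<forall>K H. (K, H) \<in> T \<longrightarrow> (H, K) \<in> T \<longrightarrow> K = H) \<and>
     (\<forall>K H. (K, H) \<in> T \<longrightarrow> K \<subseteq> H) \<and>
     (\<forall>L K H. (L, K) \<in> T \<longrightarrow> (K, H) \<in> T \<longrightarrow> (L, H) \<in> T) \<and>
     (\<forall>K H L. (K, H) \<in> T \<longrightarrow> L \<in> subgroups G \<longrightarrow> (K \<inter> L, H \<inter> L) \<in> T) \<and>
     (\<forall>K H g. (K, H) \<in> T \<longrightarrow> g \<in> carrier G \<longrightarrow>
                (conjugate G g K, conjugate G g H) \<in> T)"

definition saturated :: "('a, 'b) monoid_scheme \<Rightarrow> ('a set \<times> 'a set) set \<Rightarrow> bool" where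
  "saturated G T \<longleftrightarrow>
     (\<forall>L K H. L \<in> subgroups G \<longrightarrow> K \<in> subgroups G \<longrightarrow> H \<in> subgroups G \<longrightarrow>
        L \<subseteq> K \<longrightarrow> K \<subseteq> H \<longrightarrow> (L, H) \<in> T \<longrightarrow> (K, H) \<in> T)"

definition hull_ts :: "('a, 'b) monoid_scheme \<Rightarrow> ('a set \<times> 'a set) set \<Rightarrow> ('a set \<times> 'a set) set" where
  "hull_ts G T = \<Inter> {S. transfer_system G S \<and> saturated G S \<and> T \<subseteq> S}"

definition complete_ts :: "('a, 'b) monoid_scheme \<Rightarrow> ('a set \<times> 'a set) set" where
  "complete_ts G = {(K, H). K \<in> subgroups G \<and> H \<in> subgroups G \<and> K \<subseteq> H}"

definition compatible :: "('a, 'b) monoid_scheme \<Rightarrow> ('a set \<times> 'a set) set \<Rightarrow> ('a set \<times> 'a set) set \<Rightarrow> bool" where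
  "compatible G T T' \<longleftrightarrow>
     T \<subseteq> T' \<and>
     (\<forall>A B C. A \<in> subgroups G \<longrightarrow> B \<in> subgroups G \<longrightarrow> C \<in> subgroups G \<longrightarrow>
        B \<subseteq> A \<longrightarrow> C \<subseteq> A \<longrightarrow> (B, A) \<in> T \<longrightarrow> (B \<inter> C, B) \<in> T' \<longrightarrow> (C, A) \<in> T')"

end

theory Submission
  imports Defs
begin

text \<open>If \<open>B \<rightarrow> A\<close> is in \<open>T\<close> and \<open>B \<inter> C \<rightarrow> B\<close> in a saturated transfer system \<open>S \<supseteq> T\<close>,
  transitivity gives \<open>B \<inter> C \<rightarrow> A\<close> in \<open>S\<close>, and saturation along \<open>B \<inter> C \<le> C \<le> A\<close>
  gives \<open>C \<rightarrow> A\<close>. Compatibility is stable under intersections, so it passes to the hull;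
  for the complete transfer system the second condition is immediate.\<close>

lemma subgroups_Int:
  assumes "group G" "B \<in> subgroups G" "C \<in> subgroups G"
  shows "B \<inter> C \<in> subgroups G"
  using assms group.subgroups_Inter_pair unfolding subgroups_def by blast

lemma transfer_system_trans:
  assumes "transfer_system G S" "(L, K) \<in> S" "(K, H) \<in> S"
  shows "(L, H) \<in> S"
  using assms unfolding transfer_system_def by meson

lemma transfer_system_subset_complete_ts:
  assumes "transfer_system G T"
  shows "T \<subseteq> complete_ts G"
  using assms unfolding transfer_system_def complete_ts_def by blast

lemma compatible_saturated:
  assumes "group G" and "transfer_system G S" and "saturated G S" and "T \<subseteq> S"
  shows "compatible G T S"
  unfolding compatible_def
proof (intro conjI allI impI)
  show "T \<subseteq> S" by fact
next
  fix A B C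
  assume A: "A \<in> subgroups G" and B: "B \<in> subgroups G" and C: "C \<in> subgroups G"
    and "B \<subseteq> A" and CA: "C \<subseteq> A" and BA: "(B, A) \<in> T" and BCB: "(B \<inter> C, B) \<in> S"
  have "(B \<inter> C, A) \<in> S"
    using transfer_system_trans[OF assms(2) BCB] BA assms(4) by blast
  then show "(C, A) \<in> S"
    using assms(3) subgroups_Int[OF assms(1) B C] C A CA unfolding saturated_def by blast
qed

lemma compatible_Inter:
  assumes "\<And>S. S \<in> \<S> \<Longrightarrow> compatible G T S"
  shows "compatible G T (\<Inter> \<S>)"
  unfolding compatible_def
proof (intro conjI allI impI)
  show "T \<subseteq> \<Inter> \<S>"
    using assms unfolding compatible_def by blast
next
  fix A B C
  assume "A \<in> subgroups G" "B \<in> subgroups G" "C \<in> subgroups G" "B \<subseteq> A" "C \<subseteq> A"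
    "(B, A) \<in> T" "(B \<inter> C, B) \<in> \<Inter> \<S>"
  then show "(C, A) \<in> \<Inter> \<S>"
    using assms unfolding compatible_def by blast
qed

lemma compatible_hull_ts:
  assumes "group G"
  shows "compatible G T (hull_ts G T)"
  unfolding hull_ts_def using compatible_saturated[OF assms] by (intro compatible_Inter) blast

lemma compatible_complete_ts:
  assumes "transfer_system G T"
  shows "compatible G T (complete_ts G)"
  using transfer_system_subset_complete_ts[OF assms]
  unfolding compatible_def complete_ts_def by blast

theorem mainTheorem5:
  fixes G (structure) and T :: "('a set \<times> 'a set) set"
  assumes "group G" and "finite (carrier G)" and "transfer_system G T"
  shows "compatible G T (hull_ts G T) \<and> compatible G T (complete_ts G)"
  using compatible_hull_ts[OF assms(1)] compatible_complete_ts[OF assms(3)] by blast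

end
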